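(* Let $\sigma\neq0$, let $T$ be the shift operator $(Tf)(x)=f(x+\sigma)$ acting on polynomials in $x$, and let $\Delta=\frac{1}{\sigma}\sum_{k=l}^{m}a_kT^k$ (integers $l<m$) with $\sum_{k=l}^m a_k=0$ and $\sum_{k=l}^m k a_k=1$. Let $\beta=\big(\sum_{k=l}^m a_k k T^k\big)^{-1}$ be its conjugate operator, and for $n\ge 1$ let $P_n(x)=(x\beta)^n\cdot 1$, i.e. the result of applying $n$ times the operator "apply $\beta$, then multiply by $x$" to the constant function $1$. Then $P_n$ is a well-defined polynomial in $x$ of degree $n$ of the form $$P_n(x)=\sum_{k=1}^{n}A_k\,\sigma^{n-k}x^k,\qquad A_n=1,$$ where all coefficients $A_k$ are finite numbers depending only on the coefficients $a_l,\dots,a_m$ and not on $\sigma$.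
   Context: Here $x$ denotes the operator of multiplication by $x$. The sequence $P_n$ (with $P_0=1$) is the basic sequence of $\Delta$, satisfying $\Delta P_n=nP_{n-1}$. *)

theory Defs
  imports "HOL-Computational_Algebra.Polynomial"
begin

definition shiftk :: "'a::comm_ring_1 \<Rightarrow> int \<Rightarrow> 'a poly \<Rightarrow> 'a poly" where
  "shiftk \<sigma> k p = pcompose p [:of_int k * \<sigma>, 1:]"

definition Delta_op :: "(int \<Rightarrow> 'a::field) \<Rightarrow> int \<Rightarrow> int \<Rightarrow> 'a \<Rightarrow> 'a poly \<Rightarrow> 'a poly" where
  "Delta_op a l m \<sigma> p = smult (inverse \<sigma>) (\<Sum>k\<in>{l..m}. smult (a k) (shiftk \<sigma> k p))"

definition conj_inv_op :: "(int \<Rightarrow> 'a::field) \<Rightarrow> int \<Rightarrow> int \<Rightarrow> 'a \<Rightarrow> 'a poly \<Rightarrow> 'a poly" where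
  "conj_inv_op a l m \<sigma> p = (\<Sum>k\<in>{l..m}. smult (a k * of_int k) (shiftk \<sigma> k p))"

definition beta_op :: "(int \<Rightarrow> 'a::field) \<Rightarrow> int \<Rightarrow> int \<Rightarrow> 'a \<Rightarrow> 'a poly \<Rightarrow> 'a poly" where
  "beta_op a l m \<sigma> p = (THE q. conj_inv_op a l m \<sigma> q = p)"

definition Pseq :: "(int \<Rightarrow> 'a::field) \<Rightarrow> int \<Rightarrow> int \<Rightarrow> 'a \<Rightarrow> nat \<Rightarrow> 'a poly" where
  "Pseq a l m \<sigma> n = ((\<lambda>p. [:0, 1:] * beta_op a l m \<sigma> p) ^^ n) 1"

end

theory Submission
  imports Defs
begin

text \<open>
  Only the normalisation \<open>\<Sum> k a\<^sub>k = 1\<close> matters. It makes \<open>\<Sum> a\<^sub>k k T\<^sup>k\<close>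
  unitriangular on polynomials: since \<open>T\<^sup>k p - p\<close> has lower degree than \<open>p\<close>, the operator
  keeps the leading coefficient and lowers the degree of \<open>p\<close> minus its image. Hence it is
  bijective and \<open>\<beta>\<close> preserves degree and leading coefficient, so \<open>P\<^sub>n\<close> is monic of degree \<open>n\<close>
  with no constant term. Independence of \<open>\<sigma>\<close> comes from scaling: conjugating \<open>T\<close> (step \<open>\<sigma>\<close>)
  by \<open>x \<mapsto> x/\<sigma>\<close> gives the shift with step 1, whence \<open>P\<^sub>n(x) = \<sigma>\<^sup>n Q\<^sub>n(x/\<sigma>)\<close> with \<open>Q\<^sub>n\<close>
  the polynomial obtained for \<open>\<sigma> = 1\<close>, and \<open>A\<^sub>k\<close> is the \<open>k\<close>-th coefficient of \<open>Q\<^sub>n\<close>.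
\<close>

definition unitriangular :: "('a::zero poly \<Rightarrow> 'a poly) \<Rightarrow> bool" where
  "unitriangular L \<longleftrightarrow> (\<forall>p i. degree p \<le> i \<longrightarrow> coeff (L p) i = coeff p i)"

lemma unitriangularD: "unitriangular L \<Longrightarrow> degree p \<le> i \<Longrightarrow> coeff (L p) i = coeff p i"
  unfolding unitriangular_def by blast

lemma degree_unitriangular:
  assumes "unitriangular L"
  shows "degree (L p) = degree p"
proof (cases "p = 0")
  case True
  then have "L p = 0"
    by (intro poly_eqI) (simp add: unitriangularD[OF assms])
  with True show ?thesis by simp
next
  case False
  have "degree (L p) \<le> degree p"
    by (rule degree_le) (simp add: unitriangularD[OF assms] coeff_eq_0)
  moreover have "degree p \<le> degree (L p)"
    by (rule le_degree) (simp add: unitriangularD[OF assms] False)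
  ultimately show ?thesis by simp
qed

lemma lead_coeff_unitriangular: "unitriangular L \<Longrightarrow> lead_coeff (L p) = lead_coeff p"
  by (simp add: degree_unitriangular unitriangularD)

lemma unitriangular_surj:
  fixes L :: "'a::comm_ring poly \<Rightarrow> 'a poly"
  assumes L: "unitriangular L" and diff: "\<And>p q. L (p - q) = L p - L q"
  shows "\<exists>q. L q = p"
proof (induction "degree p" arbitrary: p rule: less_induct)
  case less
  define r where "r = L p - p"
  have r_high: "coeff r i = 0" if "degree p \<le> i" for i
    using that by (simp add: r_def unitriangularD[OF L])
  show ?case
  proof (cases "r = 0")
    case True
    then show ?thesis by (auto simp: r_def)
  next
    case False
    have "degree r < degree p"
      using r_high[of "degree r"] False by (cases "degree r < degree p") auto
    then obtain s where "L s = r"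
      using less by blast
    then have "L (p - s) = p"
      by (simp add: diff r_def)
    then show ?thesis ..
  qed
qed

lemma unitriangular_inj:
  fixes L :: "'a::comm_ring poly \<Rightarrow> 'a poly"
  assumes L: "unitriangular L" and diff: "\<And>p q. L (p - q) = L p - L q"
  shows "inj L"
proof (rule injI)
  fix p q
  assume "L p = L q"
  have "lead_coeff (p - q) = lead_coeff (L (p - q))"
    by (rule lead_coeff_unitriangular[OF L, symmetric])
  also have "\<dots> = 0"
    using \<open>L p = L q\<close> by (simp add: diff)
  finally show "p = q"
    by (simp only: leading_coeff_0_iff right_minus_eq)
qed

lemma unitriangular_ex1:
  fixes L :: "'a::comm_ring poly \<Rightarrow> 'a poly"
  assumes "unitriangular L" and "\<And>p q. L (p - q) = L p - L q"
  shows "\<exists>!q. L q = p"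
  using unitriangular_surj[OF assms] unitriangular_inj[OF assms] unfolding inj_def by blast

lemma unitriangular_sum:
  fixes L :: "'b \<Rightarrow> 'a::comm_semiring_1 poly \<Rightarrow> 'a poly"
  assumes "\<And>k. k \<in> A \<Longrightarrow> unitriangular (L k)" and "(\<Sum>k\<in>A. c k) = 1"
  shows "unitriangular (\<lambda>p. \<Sum>k\<in>A. smult (c k) (L k p))"
proof -
  have "(\<Sum>k\<in>A. c k * coeff (L k p) i) = coeff p i" if "degree p \<le> i" for p i
  proof -
    have "(\<Sum>k\<in>A. c k * coeff (L k p) i) = (\<Sum>k\<in>A. c k) * coeff p i"
      by (simp add: sum_distrib_right unitriangularD[OF assms(1) that])
    with assms(2) show ?thesis by simp
  qed
  then show ?thesis
    by (simp add: unitriangular_def coeff_sum)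
qed

lemma smult_pcompose_dilation_eq_sum_monom:
  fixes p :: "'a::field poly"
  assumes "\<sigma> \<noteq> 0" and "degree p \<le> n" and "coeff p 0 = 0"
  shows "smult (\<sigma> ^ n) (pcompose p [:0, inverse \<sigma>:]) = (\<Sum>k\<in>{1..n}. monom (coeff p k * \<sigma> ^ (n - k)) k)"
proof (rule poly_eqI)
  fix i
  show "coeff (smult (\<sigma> ^ n) (pcompose p [:0, inverse \<sigma>:])) i
      = coeff (\<Sum>k\<in>{1..n}. monom (coeff p k * \<sigma> ^ (n - k)) k) i"
  proof (cases "i \<in> {1..n}")
    case True
    then have "\<sigma> ^ n * inverse \<sigma> ^ i = \<sigma> ^ (n - i)"
      using assms(1) by (simp add: power_diff divide_inverse power_inverse)
    moreover have "coeff (\<Sum>k\<in>{1..n}. monom (coeff p k * \<sigma> ^ (n - k)) k) i = coeff p i * \<sigma> ^ (n - i)"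
      using True by (simp add: coeff_sum coeff_monom)
    ultimately show ?thesis
      by (simp add: coeff_pcompose_linear mult.assoc[symmetric])
  next
    case False
    then have "coeff p i = 0"
      using assms(2,3) by (cases "i = 0") (auto simp: coeff_eq_0)
    with False show ?thesis
      by (simp add: coeff_pcompose_linear coeff_sum)
  qed
qed

lemma unitriangular_shiftk: "unitriangular (shiftk \<sigma> k :: 'a::idom poly \<Rightarrow> 'a poly)"
proof (unfold unitriangular_def, intro allI impI)
  fix p :: "'a poly" and i
  assume "degree p \<le> i"
  let ?q = "[:of_int k * \<sigma>, 1:] :: 'a poly"
  have deg: "degree (shiftk \<sigma> k p) = degree p"
    by (simp add: shiftk_def degree_pcompose)
  have lead: "lead_coeff (shiftk \<sigma> k p) = lead_coeff p"
    using lead_coeff_comp[of ?q p] by (simp add: shiftk_def)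
  show "coeff (shiftk \<sigma> k p) i = coeff p i"
    using \<open>degree p \<le> i\<close> deg lead
    by (cases "i = degree p") (simp_all add: coeff_eq_0)
qed

lemma conj_inv_op_diff:
  "conj_inv_op a l m \<sigma> (p - q) = conj_inv_op a l m \<sigma> p - conj_inv_op a l m \<sigma> q"
  by (simp add: conj_inv_op_def shiftk_def pcompose_diff smult_diff_right sum_subtractf)

lemma conj_inv_op_smult:
  "conj_inv_op a l m \<sigma> (smult c p) = smult c (conj_inv_op a l m \<sigma> p)"
  by (intro poly_eqI) (simp add: conj_inv_op_def shiftk_def pcompose_smult coeff_sum sum_distrib_left mult_ac)

lemma unitriangular_conj_inv_op:
  assumes "(\<Sum>k\<in>{l..m}. of_int k * a k) = 1"
  shows "unitriangular (conj_inv_op a l m \<sigma>)"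
proof -
  have "(\<Sum>k\<in>{l..m}. a k * of_int k) = 1"
    using assms by (simp add: mult.commute)
  then show ?thesis
    unfolding conj_inv_op_def[abs_def] by (intro unitriangular_sum unitriangular_shiftk)
qed

lemma shiftk_pcompose_dilation:
  "shiftk \<sigma> k (pcompose p [:0, c:]) = pcompose (shiftk (c * \<sigma>) k p) [:0, c:]"
proof -
  have commute: "pcompose [:0, c:] [:of_int k * \<sigma>, 1:] = pcompose [:of_int k * (c * \<sigma>), 1:] [:0, c:]"
    by (simp add: pcompose_pCons algebra_simps)
  show ?thesis
    by (simp only: shiftk_def pcompose_assoc[symmetric] commute)
qed

lemma conj_inv_op_pcompose_dilation:
  "conj_inv_op a l m \<sigma> (pcompose p [:0, c:]) = pcompose (conj_inv_op a l m (c * \<sigma>) p) [:0, c:]"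
  by (simp add: conj_inv_op_def shiftk_pcompose_dilation pcompose_sum pcompose_smult)

lemma Pseq_0: "Pseq a l m \<sigma> 0 = 1"
  by (simp add: Pseq_def)

lemma Pseq_Suc: "Pseq a l m \<sigma> (Suc n) = [:0, 1:] * beta_op a l m \<sigma> (Pseq a l m \<sigma> n)"
  by (simp add: Pseq_def)

lemma coeff_0_Pseq_Suc: "coeff (Pseq a l m \<sigma> (Suc n)) 0 = 0"
  by (simp add: Pseq_Suc)

context
  fixes a :: "int \<Rightarrow> 'a::field" and l m :: int
  assumes first_moment: "(\<Sum>k\<in>{l..m}. of_int k * a k) = 1"
begin

lemma conj_inv_op_ex1: "\<exists>!q. conj_inv_op a l m \<sigma> q = p"
  by (rule unitriangular_ex1[OF unitriangular_conj_inv_op[OF first_moment] conj_inv_op_diff])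

lemma conj_inv_op_beta_op: "conj_inv_op a l m \<sigma> (beta_op a l m \<sigma> p) = p"
  unfolding beta_op_def by (rule theI'[OF conj_inv_op_ex1])

lemma beta_op_eqI: "conj_inv_op a l m \<sigma> q = p \<Longrightarrow> beta_op a l m \<sigma> p = q"
  unfolding beta_op_def by (rule the1_equality[OF conj_inv_op_ex1])

lemma beta_op_smult: "beta_op a l m \<sigma> (smult c p) = smult c (beta_op a l m \<sigma> p)"
  by (rule beta_op_eqI) (simp add: conj_inv_op_smult conj_inv_op_beta_op)

lemma beta_op_pcompose_dilation:
  "beta_op a l m \<sigma> (pcompose p [:0, c:]) = pcompose (beta_op a l m (c * \<sigma>) p) [:0, c:]"
  by (rule beta_op_eqI) (simp add: conj_inv_op_pcompose_dilation conj_inv_op_beta_op)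

lemma degree_beta_op: "degree (beta_op a l m \<sigma> p) = degree p"
  using degree_unitriangular[OF unitriangular_conj_inv_op[OF first_moment]]
  by (metis conj_inv_op_beta_op)

lemma lead_coeff_beta_op: "lead_coeff (beta_op a l m \<sigma> p) = lead_coeff p"
  using lead_coeff_unitriangular[OF unitriangular_conj_inv_op[OF first_moment]]
  by (metis conj_inv_op_beta_op)

lemma lead_coeff_Pseq: "lead_coeff (Pseq a l m \<sigma> n) = 1"
proof (induction n)
  case 0
  then show ?case by (simp add: Pseq_0)
next
  case (Suc n)
  then have "lead_coeff (beta_op a l m \<sigma> (Pseq a l m \<sigma> n)) = 1"
    by (simp add: lead_coeff_beta_op)
  moreover from this have "beta_op a l m \<sigma> (Pseq a l m \<sigma> n) \<noteq> 0"
    by auto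
  ultimately show ?case
    by (simp add: Pseq_Suc)
qed

lemma degree_Pseq: "degree (Pseq a l m \<sigma> n) = n"
proof (induction n)
  case 0
  then show ?case by (simp add: Pseq_0)
next
  case (Suc n)
  have "lead_coeff (beta_op a l m \<sigma> (Pseq a l m \<sigma> n)) = 1"
    by (simp add: lead_coeff_beta_op lead_coeff_Pseq)
  then have "beta_op a l m \<sigma> (Pseq a l m \<sigma> n) \<noteq> 0"
    by auto
  then show ?case
    by (simp add: Pseq_Suc degree_mult_eq degree_beta_op Suc.IH)
qed

lemma Pseq_dilation:
  assumes "\<sigma> \<noteq> 0"
  shows "Pseq a l m \<sigma> n = smult (\<sigma> ^ n) (pcompose (Pseq a l m 1 n) [:0, inverse \<sigma>:])"
proof (induction n)
  case 0
  then show ?case by (simp add: Pseq_0 pcompose_1)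
next
  case (Suc n)
  have "Pseq a l m \<sigma> (Suc n)
      = [:0, 1:] * smult (\<sigma> ^ n) (pcompose (beta_op a l m 1 (Pseq a l m 1 n)) [:0, inverse \<sigma>:])"
    using assms by (simp add: Pseq_Suc Suc.IH beta_op_smult beta_op_pcompose_dilation)
  also have "\<dots> = smult (\<sigma> ^ Suc n) (pcompose (Pseq a l m 1 (Suc n)) [:0, inverse \<sigma>:])"
    using assms by (simp add: Pseq_Suc pcompose_mult pcompose_pCons field_simps)
  finally show ?case .
qed

end

theorem theorem2p4:
  fixes a :: "int \<Rightarrow> 'a::field_char_0" and l m :: int and n :: nat
  assumes "l < m"
    and "(\<Sum>k\<in>{l..m}. a k) = 0"
    and "(\<Sum>k\<in>{l..m}. of_int k * a k) = 1"
    and "n \<ge> 1"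
  shows "(\<forall>\<sigma>::'a. \<sigma> \<noteq> 0 \<longrightarrow> (\<forall>p. \<exists>!q. conj_inv_op a l m \<sigma> q = p))
       \<and> (\<exists>A :: nat \<Rightarrow> 'a. A n = 1 \<and>
            (\<forall>\<sigma>::'a. \<sigma> \<noteq> 0 \<longrightarrow>
               Pseq a l m \<sigma> n = (\<Sum>k\<in>{1..n}. monom (A k * \<sigma> ^ (n - k)) k)
             \<and> degree (Pseq a l m \<sigma> n) = n))"
proof (intro conjI allI impI exI[of _ "coeff (Pseq a l m 1 n)"])
  fix \<sigma> :: 'a and p
  show "\<exists>!q. conj_inv_op a l m \<sigma> q = p"
    by (rule conj_inv_op_ex1[OF assms(3)])
next
  let ?A = "coeff (Pseq a l m 1 n)"
  show "?A n = 1"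
    using lead_coeff_Pseq[OF assms(3), of 1 n] by (simp only: degree_Pseq[OF assms(3)])
  fix \<sigma> :: 'a
  assume "\<sigma> \<noteq> 0"
  obtain n' where "n = Suc n'"
    using assms(4) by (cases n) auto
  then have "coeff (Pseq a l m 1 n) 0 = 0"
    by (simp only: coeff_0_Pseq_Suc)
  then have "smult (\<sigma> ^ n) (pcompose (Pseq a l m 1 n) [:0, inverse \<sigma>:])
      = (\<Sum>k\<in>{1..n}. monom (?A k * \<sigma> ^ (n - k)) k)"
    using \<open>\<sigma> \<noteq> 0\<close> degree_Pseq[OF assms(3)] by (intro smult_pcompose_dilation_eq_sum_monom) auto
  then show "Pseq a l m \<sigma> n = (\<Sum>k\<in>{1..n}. monom (?A k * \<sigma> ^ (n - k)) k)"
    using Pseq_dilation[OF assms(3) \<open>\<sigma> \<noteq> 0\<close>] by (rule trans[rotated])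
  show "degree (Pseq a l m \<sigma> n) = n"
    by (rule degree_Pseq[OF assms(3)])
qed

end
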